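(* Let $p\in(0,1)$. Consider the number line graph on $\mathbb{Z}$, which has a directed edge $(i,j)$ for all integers $i<j$, with independent edge weights $w(i,j)\sim\mathrm{Bernoulli}(p)$. For $n\ge1$, let $X_n$ be the maximum weight of a directed path from $1$ to $n$, and let $X_n^+=\max(X_n,0)$. Set \[ \beta_{tr}(p)=\Big(\sum_{n\ge1}(1-p)^{\binom{n}{2}}\Big)^{-1}. \] Then $\frac{X_n}{n-1}\to\beta_{tr}(p)$ almost surely, and $\frac{X_n^+}{n-1}\to\beta_{tr}(p)$ in $L^1$, as $n\to\infty$. In particular, $\lim_{n\to\infty}\frac{\mathbb{E}[X_n]}{n-1}=\beta_{tr}(p)$.
   Context: Every edge weight is independently $1$ with probability $p$ and $0$ otherwise. The weight of a directed path is the sum of the weights of its edges. Any directed path from $1$ to $n$ uses only vertices in $\{1,\ldots,n\}$. All $X_n$ are defined on the same probability space, namely that of the weights on the whole number line. $\binom{1}{2}=0$. *)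

theory Defs
  imports "HOL-Probability.Probability"
begin

definition inc_paths :: "int \<Rightarrow> int \<Rightarrow> int list set" where
  "inc_paths a b = {xs. xs \<noteq> [] \<and> hd xs = a \<and> last xs = b \<and> sorted_wrt (<) xs}"

definition path_weight :: "(int \<times> int \<Rightarrow> bool) \<Rightarrow> int list \<Rightarrow> nat" where
  "path_weight W xs = (\<Sum>e\<leftarrow>zip xs (tl xs). of_bool (W e))"

definition max_path_weight :: "(int \<times> int \<Rightarrow> bool) \<Rightarrow> int \<Rightarrow> int \<Rightarrow> nat" where
  "max_path_weight W a b = Max (path_weight W ` inc_paths a b)"

definition beta_tr :: "real \<Rightarrow> real" where
  "beta_tr p = inverse (\<Sum>n. (1 - p) ^ (Suc n choose 2))"

end

(* Let X(a,t) be the maximum weight of a path from a to t and call s a jump point if s = a or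
   X(a,s-1) < X(a,s). Then X(a,t) + 1 is the number of jump points in [a,t], and for a jump
   point s <= t' we have X(a,t') = X(a,s) exactly when no edge of weight 1 lies inside [s,t'].
   Every t' in [a,t] is covered in this way by exactly one jump point s, and the two events
   depend on disjoint sets of edges; taking expectations gives
     t - a + 1 = sum_s P(s is a jump point) * sum_{j <= t-s} (1-p)^((j+1) choose 2),
   which together with E X(a,t) + 1 = sum_s P(s is a jump point) yields
   |E X(a,t) - (t-a+1) beta_tr(p)| <= 1/p^2.
   For almost sure convergence cut [1, k^4 + 1] into k^3 blocks of length k: X is
   superadditive and subadditive up to 1 per block, and the block maxima are independent and
   bounded by k, so Hoeffding's inequality and Borel-Cantelli give convergence along k^4 + 1;
   monotonicity of X in the endpoint interpolates between consecutive fourth powers.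
   As 0 <= X_n <= n - 1, convergence in L^1 follows by dominated convergence. *)

theory Submission
  imports Defs "HOL-Library.Discrete_Functions" "HOL-Real_Asymp.Real_Asymp"
begin

section \<open>Maximum path weights\<close>

lemma path_weight_Nil [simp]: "path_weight W [] = 0"
  and path_weight_singleton [simp]: "path_weight W [x] = 0"
  and path_weight_Cons_Cons [simp]: "path_weight W (x # y # zs) = of_bool (W (x, y)) + path_weight W (y # zs)"
  by (simp_all add: path_weight_def)

lemma path_weight_snoc:
  "xs \<noteq> [] \<Longrightarrow> path_weight W (xs @ [u]) = path_weight W xs + of_bool (W (last xs, u))"
  by (induction xs rule: induct_list012) auto

lemma path_weight_cong:
  assumes "sorted_wrt (<) xs"
    and "\<And>v u. v \<in> set xs \<Longrightarrow> u \<in> set xs \<Longrightarrow> v < u \<Longrightarrow> W (v, u) = W' (v, u)"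
  shows "path_weight W xs = path_weight W' xs"
  using assms
proof (induction xs rule: induct_list012)
  case (3 x y zs)
  then have "W (x, y) = W' (x, y)" and "path_weight W (y # zs) = path_weight W' (y # zs)"
    by (auto intro!: "3.IH")
  then show ?case by simp
qed auto

lemma inc_paths_subset:
  assumes "xs \<in> inc_paths a b"
  shows "set xs \<subseteq> {a..b}"
proof
  fix x assume "x \<in> set xs"
  then obtain i where i: "i < length xs" "x = xs ! i"
    by (metis in_set_conv_nth)
  have "xs \<noteq> []" "sorted xs"
    using assms by (auto simp: inc_paths_def strict_sorted_iff)
  then have "hd xs \<le> x" "x \<le> last xs"
    using i by (auto simp: hd_conv_nth last_conv_nth intro: sorted_nth_mono)
  with assms show "x \<in> {a..b}"
    by (simp add: inc_paths_def)
qed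

lemma finite_inc_paths: "finite (inc_paths a b)"
proof (rule finite_subset)
  show "inc_paths a b \<subseteq> {xs. set xs \<subseteq> {a..b} \<and> length xs \<le> card {a..b}}"
  proof safe
    fix xs assume xs: "xs \<in> inc_paths a b"
    then have "distinct xs"
      by (simp add: inc_paths_def strict_sorted_iff)
    then show "length xs \<le> card {a..b}"
      using inc_paths_subset[OF xs] by (metis card_mono distinct_card finite_atLeastAtMost_int)
  qed (use inc_paths_subset in blast)
  show "finite {xs. set xs \<subseteq> {a..b} \<and> length xs \<le> card {a..b}}"
    by (rule finite_lists_length_le) simp
qed

lemma inc_paths_empty_iff: "inc_paths a b = {} \<longleftrightarrow> b < a"
proof
  assume "inc_paths a b = {}"
  moreover have "(if a = b then [a] else [a, b]) \<in> inc_paths a b" if "a \<le> b"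
    using that by (auto simp: inc_paths_def)
  ultimately show "b < a" by (metis empty_iff not_less)
next
  assume "b < a"
  then show "inc_paths a b = {}"
    using inc_paths_subset by (force simp: inc_paths_def)
qed

lemma max_path_weight_attained:
  assumes "a \<le> b"
  obtains xs where "xs \<in> inc_paths a b" "path_weight W xs = max_path_weight W a b"
proof -
  have "max_path_weight W a b \<in> path_weight W ` inc_paths a b"
    unfolding max_path_weight_def using assms finite_inc_paths inc_paths_empty_iff[of a b]
    by (intro Max_in) auto
  then show ?thesis using that by (metis imageE)
qed

lemma path_weight_le_max_path_weight:
  "xs \<in> inc_paths a b \<Longrightarrow> path_weight W xs \<le> max_path_weight W a b"
  unfolding max_path_weight_def using finite_inc_paths by simp

lemma max_path_weight_refl [simp]: "max_path_weight W a a = 0"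
proof -
  obtain xs where xs: "xs \<in> inc_paths a a" "path_weight W xs = max_path_weight W a a"
    using max_path_weight_attained by blast
  then have "xs = [a]"
    using xs(1) inc_paths_subset[OF xs(1)]
    by (cases xs rule: remdups_adj.cases) (auto simp: inc_paths_def)
  with xs show ?thesis by simp
qed

lemma max_path_weight_extend:
  assumes "a \<le> v" "v < u"
  shows "max_path_weight W a v + of_bool (W (v, u)) \<le> max_path_weight W a u"
proof -
  obtain xs where xs: "xs \<in> inc_paths a v" "path_weight W xs = max_path_weight W a v"
    using max_path_weight_attained assms(1) by blast
  have "xs @ [u] \<in> inc_paths a u"
    using xs(1) inc_paths_subset[OF xs(1)] assms
    by (auto simp: inc_paths_def sorted_wrt_append hd_append)
  then have "path_weight W (xs @ [u]) \<le> max_path_weight W a u"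
    by (rule path_weight_le_max_path_weight)
  with xs show ?thesis
    by (simp add: path_weight_snoc inc_paths_def)
qed

lemma max_path_weight_last_edge:
  assumes "a < u"
  obtains v where "a \<le> v" "v < u"
    "max_path_weight W a u = max_path_weight W a v + of_bool (W (v, u))"
proof -
  obtain xs where xs: "xs \<in> inc_paths a u" "path_weight W xs = max_path_weight W a u"
    using assms by (auto intro: max_path_weight_attained[of a u W])
  define ys where "ys = butlast xs"
  define v where "v = last ys"
  have "xs \<noteq> []" "last xs = u"
    using xs(1) by (simp_all add: inc_paths_def)
  then have xs_eq: "xs = ys @ [u]"
    unfolding ys_def using append_butlast_last_id[of xs] by simp
  have "ys \<noteq> []"
  proof
    assume "ys = []"
    then show False
      using xs(1) assms unfolding xs_eq by (simp add: inc_paths_def)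
  qed
  have sorted: "sorted_wrt (<) ys" "\<forall>x\<in>set ys. x < u" "hd ys = a"
    using xs(1) \<open>ys \<noteq> []\<close> unfolding xs_eq by (simp_all add: inc_paths_def sorted_wrt_append)
  then have ys: "ys \<in> inc_paths a v"
    using \<open>ys \<noteq> []\<close> by (simp add: inc_paths_def v_def)
  have "a \<le> v" "v < u"
    using sorted(2) inc_paths_subset[OF ys] last_in_set[OF \<open>ys \<noteq> []\<close>]
    unfolding v_def by auto
  moreover have "max_path_weight W a u \<le> max_path_weight W a v + of_bool (W (v, u))"
    using xs(2) path_weight_le_max_path_weight[OF ys, of W] \<open>ys \<noteq> []\<close>
    unfolding xs_eq v_def by (simp add: path_weight_snoc)
  with max_path_weight_extend[OF \<open>a \<le> v\<close> \<open>v < u\<close>, of W]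
  have "max_path_weight W a u = max_path_weight W a v + of_bool (W (v, u))"
    by (rule antisym[rotated])
  ultimately show ?thesis
    by (rule that)
qed

definition edges_within :: "int \<Rightarrow> int \<Rightarrow> (int \<times> int) set" where
  "edges_within a b = {e. a \<le> fst e \<and> fst e < snd e \<and> snd e \<le> b}"

lemma finite_edges_within: "finite (edges_within a b)"
  by (rule finite_subset[of _ "{a..b} \<times> {a..b}"]) (auto simp: edges_within_def)

lemma edges_within_subset: "edges_within a b \<subseteq> {e. fst e < snd e}"
  by (auto simp: edges_within_def)

lemma card_edges_within:
  "s \<le> t \<Longrightarrow> card (edges_within s t) = nat (t - s + 1) choose 2"
proof (induction t rule: int_ge_induct)
  case base
  have "edges_within s s = {}"
    by (auto simp: edges_within_def)
  then show ?case by simp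
next
  case (step t)
  have split: "edges_within s (t + 1) = edges_within s t \<union> (\<lambda>v. (v, t + 1)) ` {s..t}"
    by (auto simp: edges_within_def image_iff)
  have "card (edges_within s (t + 1)) = card (edges_within s t) + card ((\<lambda>v. (v, t + 1)) ` {s..t})"
    unfolding split by (rule card_Un_disjoint[OF finite_edges_within]) (auto simp: edges_within_def)
  also have "card ((\<lambda>v. (v, t + 1)) ` {s..t}) = nat (t - s + 1)"
    by (simp add: card_image inj_on_def)
  finally show ?case
    using step by (simp add: numeral_2_eq_2 nat_add_distrib)
qed

lemma max_path_weight_cong:
  assumes "\<And>e. e \<in> edges_within a b \<Longrightarrow> W e = W' e"
  shows "max_path_weight W a b = max_path_weight W' a b"
proof -
  have "path_weight W xs = path_weight W' xs" if xs: "xs \<in> inc_paths a b" for xs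
  proof (rule path_weight_cong)
    show "sorted_wrt (<) xs"
      using xs by (simp add: inc_paths_def)
    fix v u assume "v \<in> set xs" "u \<in> set xs" "v < u"
    then show "W (v, u) = W' (v, u)"
      using inc_paths_subset[OF xs] by (intro assms) (auto simp: edges_within_def)
  qed
  then show ?thesis
    unfolding max_path_weight_def by (metis (mono_tags, lifting) image_cong)
qed

lemma int_ge_strong_induct [consumes 1, case_names step]:
  fixes b c :: int
  assumes "b \<le> c" and "\<And>c. b \<le> c \<Longrightarrow> (\<And>v. b \<le> v \<Longrightarrow> v < c \<Longrightarrow> P v) \<Longrightarrow> P c"
  shows "P c"
  using assms(1)
proof (induction "nat (c - b)" arbitrary: c rule: less_induct)
  case less
  show ?case
    by (rule assms(2)[OF less(2)]) (rule less(1), auto)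
qed

lemma max_path_weight_mono:
  "a \<le> v \<Longrightarrow> v \<le> u \<Longrightarrow> max_path_weight W a v \<le> max_path_weight W a u"
  using max_path_weight_extend[of a v u W] by (cases "v = u") auto

lemma max_path_weight_le_pred_plus_one:
  assumes "a < u"
  shows "max_path_weight W a u \<le> max_path_weight W a (u - 1) + 1"
proof -
  obtain v where v: "a \<le> v" "v < u" "max_path_weight W a u = max_path_weight W a v + of_bool (W (v, u))"
    using max_path_weight_last_edge[OF assms] .
  then have "max_path_weight W a v \<le> max_path_weight W a (u - 1)"
    by (intro max_path_weight_mono) auto
  with v(3) show ?thesis by simp
qed

lemma max_path_weight_le_length: "a \<le> b \<Longrightarrow> max_path_weight W a b \<le> nat (b - a)"
proof (induction b rule: int_ge_induct)
  case (step b)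
  then show ?case using max_path_weight_le_pred_plus_one[of a "b + 1" W] by simp
qed simp

lemma max_path_weight_superadditive:
  assumes "a \<le> b" "b \<le> c"
  shows "max_path_weight W a b + max_path_weight W b c \<le> max_path_weight W a c"
  using assms(2)
proof (induction c rule: int_ge_strong_induct)
  case (step c)
  show ?case
  proof (cases "c = b")
    case False
    with step.hyps have "b < c" by simp
    then obtain v where v: "b \<le> v" "v < c"
      "max_path_weight W b c = max_path_weight W b v + of_bool (W (v, c))"
      by (rule max_path_weight_last_edge)
    have "max_path_weight W a b + max_path_weight W b v \<le> max_path_weight W a v"
      using step.IH[OF v(1,2)] .
    moreover have "max_path_weight W a v + of_bool (W (v, c)) \<le> max_path_weight W a c"
      using v assms by (intro max_path_weight_extend) auto
    ultimately show ?thesis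
      using v(3) by simp
  qed simp
qed

lemma max_path_weight_subadditive:
  assumes "a \<le> b" "b \<le> c"
  shows "max_path_weight W a c \<le> max_path_weight W a b + max_path_weight W b c + 1"
  using assms(2)
proof (induction c rule: int_ge_strong_induct)
  case (step c)
  show ?case
  proof (cases "c = b")
    case False
    with step.hyps assms(1) have "a < c" by simp
    then obtain v where v: "a \<le> v" "v < c"
      "max_path_weight W a c = max_path_weight W a v + of_bool (W (v, c))"
      by (rule max_path_weight_last_edge)
    show ?thesis
    proof (cases "b \<le> v")
      case True
      have "max_path_weight W a v \<le> max_path_weight W a b + max_path_weight W b v + 1"
        using step.IH[OF True v(2)] .
      moreover have "max_path_weight W b v + of_bool (W (v, c)) \<le> max_path_weight W b c"
        using True v by (intro max_path_weight_extend) auto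
      ultimately show ?thesis
        using v(3) by simp
    next
      case False
      then have "max_path_weight W a v \<le> max_path_weight W a b"
        using v by (intro max_path_weight_mono) auto
      then show ?thesis
        using v(3) by simp
    qed
  qed simp
qed

lemma max_path_weight_chain_bounds:
  assumes "\<And>j. b j \<le> b (Suc j)"
  shows "(\<Sum>j<m. max_path_weight W (b j) (b (Suc j))) \<le> max_path_weight W (b 0) (b m)
    \<and> max_path_weight W (b 0) (b m) \<le> (\<Sum>j<m. max_path_weight W (b j) (b (Suc j))) + m"
proof (induction m)
  case (Suc m)
  have "b 0 \<le> b m"
    using assms by (rule lift_Suc_mono_le) simp
  with assms[of m] Suc.IH show ?case
    using max_path_weight_superadditive[of "b 0" "b m" "b (Suc m)" W]
      max_path_weight_subadditive[of "b 0" "b m" "b (Suc m)" W]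
    by simp
qed simp

section \<open>Jump points and edge-free intervals\<close>

definition jump_point :: "(int \<times> int \<Rightarrow> bool) \<Rightarrow> int \<Rightarrow> int \<Rightarrow> bool" where
  "jump_point W a s \<longleftrightarrow> s = a \<or> max_path_weight W a (s - 1) < max_path_weight W a s"

definition edge_free :: "(int \<times> int \<Rightarrow> bool) \<Rightarrow> int \<Rightarrow> int \<Rightarrow> bool" where
  "edge_free W s t \<longleftrightarrow> (\<forall>e \<in> edges_within s t. \<not> W e)"

lemma max_path_weight_pred_plus_jump:
  "a < u \<Longrightarrow> max_path_weight W a u = max_path_weight W a (u - 1) + of_bool (jump_point W a u)"
  using max_path_weight_le_pred_plus_one[of a u W] max_path_weight_mono[of a "u - 1" u W]
  by (auto simp: jump_point_def)

lemma max_path_weight_eq_sum_jump_points: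
  "a \<le> t \<Longrightarrow> real (max_path_weight W a t) + 1 = (\<Sum>s\<in>{a..t}. of_bool (jump_point W a s))"
proof (induction t rule: int_ge_induct)
  case base
  then show ?case by (simp add: jump_point_def)
next
  case (step t)
  have "{a..t + 1} = insert (t + 1) {a..t}"
    using step.hyps by auto
  then show ?case
    using step max_path_weight_pred_plus_jump[of a "t + 1" W] by simp
qed

lemma last_jump_point:
  assumes "a \<le> t"
  obtains s where "a \<le> s" "s \<le> t" "jump_point W a s" "max_path_weight W a s = max_path_weight W a t"
  using assms
proof (induction t arbitrary: thesis rule: int_ge_induct)
  case base
  then show ?case by (simp add: jump_point_def)
next
  case (step t)
  show ?case
  proof (cases "jump_point W a (t + 1)")
    case True
    then show ?thesis using step.hyps by (intro step.prems) auto
  next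
    case False
    then have "max_path_weight W a (t + 1) = max_path_weight W a t"
      using max_path_weight_pred_plus_jump[of a "t + 1" W] step.hyps by simp
    then show ?thesis
      using step.IH[of thesis] step.prems by fastforce
  qed
qed

lemma max_path_weight_less_at_jump_point:
  assumes "a \<le> s" "s < s'" "jump_point W a s'"
  shows "max_path_weight W a s < max_path_weight W a s'"
proof -
  have "max_path_weight W a s \<le> max_path_weight W a (s' - 1)"
    using assms by (intro max_path_weight_mono) auto
  also have "\<dots> < max_path_weight W a s'"
    using assms by (auto simp: jump_point_def)
  finally show ?thesis .
qed

lemma edge_free_if_max_path_weight_eq:
  assumes "a \<le> s" "s \<le> t" "max_path_weight W a t = max_path_weight W a s"
  shows "edge_free W s t"
  unfolding edge_free_def
proof (intro ballI notI)
  fix e assume e: "e \<in> edges_within s t" "W e"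
  then have "max_path_weight W a (fst e) + 1 \<le> max_path_weight W a (snd e)"
    using max_path_weight_extend[of a "fst e" "snd e" W] assms(1,2) by (auto simp: edges_within_def)
  moreover have "max_path_weight W a s \<le> max_path_weight W a (fst e)"
    "max_path_weight W a (snd e) \<le> max_path_weight W a t"
    using e assms(1,2) by (auto simp: edges_within_def intro!: max_path_weight_mono)
  ultimately show False
    using assms(3) by simp
qed

lemma max_path_weight_eq_if_edge_free:
  assumes "a \<le> s" "jump_point W a s" "s \<le> t" "edge_free W s t"
  shows "max_path_weight W a t = max_path_weight W a s"
  using assms(3,4)
proof (induction t rule: int_ge_induct)
  case (step t)
  have "edge_free W s t"
    using step.prems by (auto simp: edge_free_def edges_within_def)
  then have IH: "max_path_weight W a t = max_path_weight W a s"
    by (rule step.IH)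
  from step.hyps assms(1) have "a < t + 1" by simp
  then obtain v where v: "a \<le> v" "v < t + 1"
    "max_path_weight W a (t + 1) = max_path_weight W a v + of_bool (W (v, t + 1))"
    by (rule max_path_weight_last_edge)
  have "max_path_weight W a (t + 1) \<le> max_path_weight W a s"
  proof (cases "s \<le> v")
    case True
    then have "\<not> W (v, t + 1)"
      using step.prems v by (auto simp: edge_free_def edges_within_def)
    moreover have "max_path_weight W a v \<le> max_path_weight W a t"
      using v by (intro max_path_weight_mono) auto
    ultimately show ?thesis
      using v(3) IH by simp
  next
    case False
    then have "max_path_weight W a v < max_path_weight W a s"
      using v assms by (intro max_path_weight_less_at_jump_point) auto
    then show ?thesis
      using v(3) by simp
  qed
  moreover have "max_path_weight W a s \<le> max_path_weight W a (t + 1)"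
    using step.hyps assms by (intro max_path_weight_mono) auto
  ultimately show ?case by simp
qed simp

lemma max_path_weight_eq_iff_edge_free:
  assumes "a \<le> s" "s \<le> t" "jump_point W a s"
  shows "max_path_weight W a t = max_path_weight W a s \<longleftrightarrow> edge_free W s t"
  using assms edge_free_if_max_path_weight_eq max_path_weight_eq_if_edge_free by blast

lemma jump_point_edge_free_unique:
  assumes "a \<le> t"
  shows "\<exists>!s. a \<le> s \<and> s \<le> t \<and> jump_point W a s \<and> edge_free W s t"
proof (rule ex_ex1I)
  obtain s where s: "a \<le> s" "s \<le> t" "jump_point W a s"
    and "max_path_weight W a s = max_path_weight W a t"
    using last_jump_point[OF assms] .
  then have "edge_free W s t"
    using max_path_weight_eq_iff_edge_free[OF s] by simp
  with s show "\<exists>s. a \<le> s \<and> s \<le> t \<and> jump_point W a s \<and> edge_free W s t"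
    by blast
next
  fix s s'
  assume s: "a \<le> s \<and> s \<le> t \<and> jump_point W a s \<and> edge_free W s t"
    and s': "a \<le> s' \<and> s' \<le> t \<and> jump_point W a s' \<and> edge_free W s' t"
  then have "max_path_weight W a s = max_path_weight W a s'"
    using max_path_weight_eq_iff_edge_free[of a s t W] max_path_weight_eq_iff_edge_free[of a s' t W]
    by simp
  then show "s = s'"
    using s s' max_path_weight_less_at_jump_point[of a s s' W]
      max_path_weight_less_at_jump_point[of a s' s W]
    by (cases s s' rule: linorder_cases) auto
qed

lemma sum_jump_point_edge_free:
  assumes "a \<le> t"
  shows "(\<Sum>s\<in>{a..t}. \<Sum>t'\<in>{s..t}. of_bool (jump_point W a s \<and> edge_free W s t') :: real)
    = of_int (t - a + 1)"
proof -
  let ?P = "\<lambda>s t'. jump_point W a s \<and> edge_free W s t'"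
  have "(\<Sum>t'\<in>{s..t}. of_bool (?P s t') :: real) = (\<Sum>t'\<in>{a..t}. of_bool (s \<le> t' \<and> ?P s t'))"
    if "s \<in> {a..t}" for s
    using that by (intro sum.mono_neutral_cong_left) (auto simp del: sum_of_bool_eq)
  then have "(\<Sum>s\<in>{a..t}. \<Sum>t'\<in>{s..t}. of_bool (?P s t') :: real)
      = (\<Sum>s\<in>{a..t}. \<Sum>t'\<in>{a..t}. of_bool (s \<le> t' \<and> ?P s t'))"
    by (rule sum.cong[OF refl])
  also have "\<dots> = (\<Sum>t'\<in>{a..t}. \<Sum>s\<in>{a..t}. of_bool (s \<le> t' \<and> ?P s t'))"
    by (rule sum.swap)
  also have "\<dots> = (\<Sum>t'\<in>{a..t}. 1)"
  proof (rule sum.cong[OF refl])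
    fix t' assume t': "t' \<in> {a..t}"
    then obtain s0 where s0: "\<And>s. a \<le> s \<and> s \<le> t' \<and> ?P s t' \<longleftrightarrow> s = s0"
      using jump_point_edge_free_unique[of a t' W] by (metis atLeastAtMost_iff)
    have "{a..t} \<inter> {s. s \<le> t' \<and> ?P s t'} = {s0}"
    proof (intro equalityI subsetI)
      fix s assume "s \<in> {a..t} \<inter> {s. s \<le> t' \<and> ?P s t'}"
      then show "s \<in> {s0}" using s0[of s] by simp
    next
      fix s assume "s \<in> {s0}"
      then show "s \<in> {a..t} \<inter> {s. s \<le> t' \<and> ?P s t'}" using s0[of s] t' by simp
    qed
    then show "(\<Sum>s\<in>{a..t}. of_bool (s \<le> t' \<and> ?P s t')) = (1 :: real)"
      by simp
  qed
  also have "\<dots> = of_int (t - a + 1)"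
    using assms by simp
  finally show ?thesis .
qed

lemma jump_point_cong:
  assumes "\<And>e. e \<in> edges_within a s \<Longrightarrow> W e = W' e"
  shows "jump_point W a s = jump_point W' a s"
proof -
  have "max_path_weight W a s' = max_path_weight W' a s'" if "s' \<le> s" for s'
    using that by (intro max_path_weight_cong assms) (auto simp: edges_within_def)
  then show ?thesis
    by (simp add: jump_point_def)
qed

lemma edge_free_cong:
  "(\<And>e. e \<in> edges_within s t \<Longrightarrow> W e = W' e) \<Longrightarrow> edge_free W s t = edge_free W' s t"
  by (simp add: edge_free_def)

section \<open>Random edge weights\<close>

lemma sets_PiM_count_space_finite:
  assumes "finite F"
  shows "sets (\<Pi>\<^sub>M i\<in>F. count_space (UNIV :: 'b :: countable set)) = Pow (\<Pi>\<^sub>E i\<in>F. UNIV)"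
proof (intro equalityI subsetI)
  fix A assume "A \<in> sets (\<Pi>\<^sub>M i\<in>F. count_space (UNIV :: 'b set))"
  then show "A \<in> Pow (\<Pi>\<^sub>E i\<in>F. UNIV)"
    using sets.sets_into_space by (fastforce simp: space_PiM)
next
  fix A assume A: "A \<in> Pow (\<Pi>\<^sub>E i\<in>F. UNIV :: 'b set)"
  have "countable A"
    using A by (intro countable_subset[OF _ countable_PiE[OF assms]]) auto
  moreover have "{x} \<in> sets (\<Pi>\<^sub>M i\<in>F. count_space (UNIV :: 'b set))" if "x \<in> A" for x
  proof -
    have "x \<in> (\<Pi>\<^sub>E i\<in>F. UNIV)"
      using that A by auto
    then have "{x} = (\<Pi>\<^sub>E i\<in>F. {x i})"
      by (simp add: PiE_iff PiE_singleton)
    then show ?thesis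
      using assms by (auto intro!: sets_PiM_I_finite)
  qed
  ultimately have "(\<Union>x\<in>A. {x}) \<in> sets (\<Pi>\<^sub>M i\<in>F. count_space (UNIV :: 'b set))"
    by (intro sets.countable_UN') auto
  then show "A \<in> sets (\<Pi>\<^sub>M i\<in>F. count_space (UNIV :: 'b set))"
    by simp
qed

lemma measurable_PiM_count_space_finite:
  assumes "finite F" "\<And>x. g x \<in> space N"
  shows "g \<in> measurable (\<Pi>\<^sub>M i\<in>F. count_space (UNIV :: 'b :: countable set)) N"
  using assms sets_PiM_count_space_finite[OF assms(1)]
  by (auto simp: measurable_def space_PiM)

definition edge_free_prob :: "real \<Rightarrow> nat \<Rightarrow> real" where
  "edge_free_prob p n = (1 - p) ^ (n choose 2)"

locale bernoulli_number_line = prob_space M for M :: "'a measure" +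
  fixes w :: "int \<times> int \<Rightarrow> 'a \<Rightarrow> bool" and p :: real
  assumes p_pos: "0 < p" and p_less_1: "p < 1"
    and indep_weights: "indep_vars (\<lambda>_. count_space UNIV) w {e. fst e < snd e}"
    and distr_weight: "\<And>e. fst e < snd e \<Longrightarrow> distr M (count_space UNIV) (w e) = measure_pmf (bernoulli_pmf p)"
begin

abbreviation weights :: "'a \<Rightarrow> int \<times> int \<Rightarrow> bool" where
  "weights \<omega> \<equiv> \<lambda>e. w e \<omega>"

lemma measurable_weight:
  "fst e < snd e \<Longrightarrow> w e \<in> measurable M (count_space UNIV)"
  using indep_weights unfolding indep_vars_def by blast

lemma measurable_determined:
  assumes "finite F" "F \<subseteq> {e. fst e < snd e}"
    and "\<And>W W'. (\<And>e. e \<in> F \<Longrightarrow> W e = W' e) \<Longrightarrow> g W = g W'"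
    and "\<And>W. g W \<in> space N"
  shows "(\<lambda>\<omega>. g (weights \<omega>)) \<in> measurable M N"
proof -
  have "(\<lambda>\<omega>. restrict (weights \<omega>) F) \<in> measurable M (\<Pi>\<^sub>M e\<in>F. count_space UNIV)"
    using assms(2) measurable_weight by (intro measurable_restrict) auto
  moreover have "g \<in> measurable (\<Pi>\<^sub>M e\<in>F. count_space UNIV) N"
    using assms(1,4) by (rule measurable_PiM_count_space_finite)
  ultimately have "(\<lambda>\<omega>. g (restrict (weights \<omega>) F)) \<in> measurable M N"
    by (rule measurable_compose)
  moreover have "g (restrict (weights \<omega>) F) = g (weights \<omega>)" for \<omega>
    by (rule assms(3)) simp
  ultimately show ?thesis
    by simp
qed

lemma event_determined:
  assumes "finite F" "F \<subseteq> {e. fst e < snd e}"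
    and "\<And>W W'. (\<And>e. e \<in> F \<Longrightarrow> W e = W' e) \<Longrightarrow> P W = P W'"
  shows "{\<omega> \<in> space M. P (weights \<omega>)} \<in> events"
proof -
  have "(\<lambda>\<omega>. P (weights \<omega>)) \<in> measurable M (count_space UNIV)"
    using measurable_determined[OF assms, where N = "count_space UNIV"] by simp
  from measurable_sets[OF this, of "{True}"] show ?thesis
    by (simp add: vimage_def Int_def conj_commute)
qed

lemma indep_events_determined:
  assumes A: "finite A" "A \<subseteq> {e. fst e < snd e}" and B: "finite B" "B \<subseteq> {e. fst e < snd e}"
    and "A \<inter> B = {}"
    and P: "\<And>W W'. (\<And>e. e \<in> A \<Longrightarrow> W e = W' e) \<Longrightarrow> P W = P W'"
    and Q: "\<And>W W'. (\<And>e. e \<in> B \<Longrightarrow> W e = W' e) \<Longrightarrow> Q W = Q W'"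
  shows "prob {\<omega> \<in> space M. P (weights \<omega>) \<and> Q (weights \<omega>)}
    = prob {\<omega> \<in> space M. P (weights \<omega>)} * prob {\<omega> \<in> space M. Q (weights \<omega>)}"
proof -
  let ?MA = "\<Pi>\<^sub>M e\<in>A. count_space (UNIV :: bool set)"
  let ?MB = "\<Pi>\<^sub>M e\<in>B. count_space (UNIV :: bool set)"
  let ?XA = "\<lambda>\<omega>. restrict (weights \<omega>) A" and ?XB = "\<lambda>\<omega>. restrict (weights \<omega>) B"
  have "indep_var ?MA ?XA ?MB ?XB"
    using indep_weights assms(5) A(2) B(2) by (rule indep_var_restrict)
  moreover have "{x \<in> space ?MA. P x} \<in> sets ?MA" "{x \<in> space ?MB. Q x} \<in> sets ?MB"
    using sets_PiM_count_space_finite[OF A(1)] sets_PiM_count_space_finite[OF B(1)]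
    by (auto simp: space_PiM)
  ultimately have "prob ((\<lambda>\<omega>. (?XA \<omega>, ?XB \<omega>)) -` ({x \<in> space ?MA. P x} \<times> {x \<in> space ?MB. Q x}) \<inter> space M)
      = prob (?XA -` {x \<in> space ?MA. P x} \<inter> space M) * prob (?XB -` {x \<in> space ?MB. Q x} \<inter> space M)"
    by (rule indep_varD)
  moreover have "P (?XA \<omega>) = P (weights \<omega>)" "Q (?XB \<omega>) = Q (weights \<omega>)" for \<omega>
    by (simp_all add: P[of "?XA \<omega>" "weights \<omega>"] Q[of "?XB \<omega>" "weights \<omega>"])
  moreover have "?XA \<omega> \<in> space ?MA" "?XB \<omega> \<in> space ?MB" for \<omega>
    by (simp_all add: space_PiM)
  ultimately show ?thesis
    by (simp add: vimage_def Int_def conj_commute)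
qed

lemma prob_weights_all_false:
  assumes "finite F" "F \<subseteq> {e. fst e < snd e}"
  shows "prob {\<omega> \<in> space M. \<forall>e\<in>F. \<not> w e \<omega>} = (1 - p) ^ card F"
proof (cases "F = {}")
  case True
  then show ?thesis by (simp add: prob_space)
next
  case False
  have prob_false: "prob (w e -` {False} \<inter> space M) = 1 - p" if "fst e < snd e" for e
  proof -
    have "prob (w e -` {False} \<inter> space M) = measure (distr M (count_space UNIV) (w e)) {False}"
      using measurable_weight[OF that] by (simp add: measure_distr)
    also have "\<dots> = 1 - p"
      using distr_weight[OF that] p_pos p_less_1 by (simp add: measure_pmf_single)
    finally show ?thesis .
  qed
  have "{\<omega> \<in> space M. \<forall>e\<in>F. \<not> w e \<omega>} = (\<Inter>e\<in>F. w e -` {False} \<inter> space M)"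
    using False by auto
  also have "prob \<dots> = (\<Prod>e\<in>F. prob (w e -` {False} \<inter> space M))"
    using indep_weights False assms by (intro indep_varsD) auto
  also have "\<dots> = (\<Prod>e\<in>F. 1 - p)"
    using assms(2) by (intro prod.cong refl prob_false) auto
  finally show ?thesis by simp
qed

lemma events_jump_point: "{\<omega> \<in> space M. jump_point (weights \<omega>) a s} \<in> events"
  by (intro event_determined[OF finite_edges_within edges_within_subset] jump_point_cong) blast

lemma events_jump_point_edge_free:
  "{\<omega> \<in> space M. jump_point (weights \<omega>) a s \<and> edge_free (weights \<omega>) s t} \<in> events"
proof (rule event_determined)
  show "finite (edges_within a s \<union> edges_within s t)"
    by (simp add: finite_edges_within)
  show "edges_within a s \<union> edges_within s t \<subseteq> {e. fst e < snd e}"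
    using edges_within_subset by blast
qed (metis Un_iff jump_point_cong edge_free_cong)

lemma prob_edge_free:
  assumes "s \<le> t"
  shows "prob {\<omega> \<in> space M. edge_free (weights \<omega>) s t} = edge_free_prob p (nat (t - s + 1))"
  using prob_weights_all_false[OF finite_edges_within edges_within_subset, of s t]
  by (simp add: edge_free_def edge_free_prob_def card_edges_within[OF assms])

lemma prob_jump_point_edge_free:
  assumes "s \<le> t"
  shows "prob {\<omega> \<in> space M. jump_point (weights \<omega>) a s \<and> edge_free (weights \<omega>) s t}
    = prob {\<omega> \<in> space M. jump_point (weights \<omega>) a s} * edge_free_prob p (nat (t - s + 1))"
proof -
  have "edges_within a s \<inter> edges_within s t = {}"
    by (auto simp: edges_within_def)
  then show ?thesis
    unfolding prob_edge_free[OF assms, symmetric]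
    by (intro indep_events_determined[OF finite_edges_within edges_within_subset
        finite_edges_within edges_within_subset] jump_point_cong edge_free_cong) auto
qed

end

section \<open>The expected maximum weight\<close>

definition edge_free_series :: "real \<Rightarrow> real" where
  "edge_free_series p = (\<Sum>n. edge_free_prob p (Suc n))"

lemma beta_tr_eq_inverse: "beta_tr p = inverse (edge_free_series p)"
  by (simp add: beta_tr_def edge_free_series_def edge_free_prob_def)

context
  fixes p :: real
  assumes p_pos: "0 < p" and p_less_1: "p < 1"
begin

lemma edge_free_prob_Suc_le: "edge_free_prob p (Suc n) \<le> (1 - p) ^ n"
proof -
  have "n \<le> Suc n choose 2"
    by (simp add: numeral_2_eq_2)
  then show ?thesis
    unfolding edge_free_prob_def using p_pos p_less_1 by (intro power_decreasing) auto
qed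

lemma summable_edge_free_prob: "summable (\<lambda>n. edge_free_prob p (Suc n))"
proof (rule summable_comparison_test)
  show "summable (\<lambda>n. (1 - p) ^ n)"
    using p_pos p_less_1 by (intro summable_geometric) auto
  show "\<exists>N. \<forall>n\<ge>N. norm (edge_free_prob p (Suc n)) \<le> (1 - p) ^ n"
    using edge_free_prob_Suc_le p_less_1 by (auto simp: edge_free_prob_def)
qed

lemma sum_edge_free_prob_le_series: "(\<Sum>n<m. edge_free_prob p (Suc n)) \<le> edge_free_series p"
  unfolding edge_free_series_def using p_less_1
  by (intro sum_le_suminf summable_edge_free_prob) (auto simp: edge_free_prob_def)

lemma one_le_edge_free_series: "1 \<le> edge_free_series p"
  using sum_edge_free_prob_le_series[of 1] by (simp add: edge_free_prob_def binomial_eq_0)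

lemma edge_free_series_minus_sum_le:
  "edge_free_series p - (\<Sum>n<m. edge_free_prob p (Suc n)) \<le> (1 - p) ^ m / p"
proof -
  have "edge_free_series p - (\<Sum>n<m. edge_free_prob p (Suc n)) = (\<Sum>n. edge_free_prob p (Suc (n + m)))"
    unfolding edge_free_series_def using suminf_minus_initial_segment[OF summable_edge_free_prob, of m]
    by simp
  also have "\<dots> \<le> (\<Sum>n. (1 - p) ^ m * (1 - p) ^ n)"
  proof (rule suminf_le)
    show "summable (\<lambda>n. edge_free_prob p (Suc (n + m)))"
      using summable_ignore_initial_segment[OF summable_edge_free_prob, of m] by simp
    show "summable (\<lambda>n. (1 - p) ^ m * (1 - p) ^ n)"
      using p_pos p_less_1 by (intro summable_mult summable_geometric) auto
    show "edge_free_prob p (Suc (n + m)) \<le> (1 - p) ^ m * (1 - p) ^ n" for n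
      using edge_free_prob_Suc_le[of "n + m"] by (simp add: power_add mult.commute)
  qed
  also have "\<dots> = (1 - p) ^ m / p"
    using p_pos p_less_1 by (simp add: suminf_mult suminf_geometric)
  finally show ?thesis .
qed

lemma sum_power_Suc_le: "(\<Sum>j<n. (1 - p) ^ Suc j) \<le> 1 / p"
proof -
  have "(\<Sum>j<n. (1 - p) ^ Suc j) = (1 - p) * (1 - (1 - p) ^ n) / p"
    using p_pos by (simp add: sum_distrib_left[symmetric] sum_gp_strict)
  also have "\<dots> \<le> 1 / p"
    using p_pos p_less_1 by (intro divide_right_mono mult_le_one) (simp_all add: power_le_one)
  finally show ?thesis .
qed

end

lemma sum_int_interval_reindex: "(\<Sum>x\<in>{s..t}. g (nat (x - s))) = (\<Sum>j<nat (t - s + 1). g j)"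
  by (rule sum.reindex_bij_witness[of _ "\<lambda>j. s + int j" "\<lambda>x. nat (x - s)"]) auto

lemma sum_int_interval_reindex_reflect: "(\<Sum>x\<in>{s..t}. g (nat (t - x))) = (\<Sum>j<nat (t - s + 1). g j)"
  by (rule sum.reindex_bij_witness[of _ "\<lambda>j. t - int j" "\<lambda>x. nat (t - x)"]) auto

lemma (in prob_space) integral_of_bool:
  assumes "{\<omega> \<in> space M. P \<omega>} \<in> events"
  shows "integrable M (\<lambda>\<omega>. of_bool (P \<omega>) :: real)"
    and "(\<integral>\<omega>. of_bool (P \<omega>) \<partial>M) = prob {\<omega> \<in> space M. P \<omega>}"
proof -
  have eq: "(of_bool (P \<omega>) :: real) = indicator {\<omega> \<in> space M. P \<omega>} \<omega>" if "\<omega> \<in> space M" for \<omega>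
    using that by (simp add: indicator_def)
  show "integrable M (\<lambda>\<omega>. of_bool (P \<omega>) :: real)"
    using assms by (simp add: Bochner_Integration.integrable_cong[OF refl eq] emeasure_eq_measure)
  show "(\<integral>\<omega>. of_bool (P \<omega>) \<partial>M) = prob {\<omega> \<in> space M. P \<omega>}"
    using assms by (simp add: Bochner_Integration.integral_cong[OF refl eq])
qed

context bernoulli_number_line
begin

lemma measurable_max_path_weight [measurable]:
  "(\<lambda>\<omega>. real (max_path_weight (weights \<omega>) a b)) \<in> borel_measurable M"
proof (rule measurable_determined[OF finite_edges_within edges_within_subset])
  fix W W' :: "int \<times> int \<Rightarrow> bool"
  assume "\<And>e. e \<in> edges_within a b \<Longrightarrow> W e = W' e"
  then show "real (max_path_weight W a b) = real (max_path_weight W' a b)"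
    by (simp add: max_path_weight_cong[of a b W W'])
qed simp

lemma expectation_max_path_weight:
  assumes "a \<le> t"
  shows "integrable M (\<lambda>\<omega>. real (max_path_weight (weights \<omega>) a t))"
    and "expectation (\<lambda>\<omega>. real (max_path_weight (weights \<omega>) a t))
      = (\<Sum>s\<in>{a..t}. prob {\<omega> \<in> space M. jump_point (weights \<omega>) a s}) - 1"
proof -
  have eq: "real (max_path_weight (weights \<omega>) a t) = (\<Sum>s\<in>{a..t}. of_bool (jump_point (weights \<omega>) a s)) - 1" for \<omega>
    using max_path_weight_eq_sum_jump_points[OF assms, of "weights \<omega>"] by simp
  have int: "integrable M (\<lambda>\<omega>. of_bool (jump_point (weights \<omega>) a s) :: real)" for s
    by (rule integral_of_bool(1)[OF events_jump_point])
  show "integrable M (\<lambda>\<omega>. real (max_path_weight (weights \<omega>) a t))"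
    unfolding eq using int by (intro Bochner_Integration.integrable_diff Bochner_Integration.integrable_sum) simp_all
  show "expectation (\<lambda>\<omega>. real (max_path_weight (weights \<omega>) a t))
      = (\<Sum>s\<in>{a..t}. prob {\<omega> \<in> space M. jump_point (weights \<omega>) a s}) - 1"
    unfolding eq using int
    by (simp add: Bochner_Integration.integral_diff Bochner_Integration.integrable_sum Bochner_Integration.integral_sum
        integral_of_bool(2)[OF events_jump_point] prob_space del: sum_of_bool_eq)
qed

lemma length_eq_sum_prob_jump_point:
  assumes "a \<le> t"
  shows "of_int (t - a + 1) = (\<Sum>s\<in>{a..t}. prob {\<omega> \<in> space M. jump_point (weights \<omega>) a s}
    * (\<Sum>j<nat (t - s + 1). edge_free_prob p (Suc j)))"
proof -
  let ?E = "\<lambda>s t'. {\<omega> \<in> space M. jump_point (weights \<omega>) a s \<and> edge_free (weights \<omega>) s t'}"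
  have "of_int (t - a + 1) = expectation (\<lambda>\<omega>. \<Sum>s\<in>{a..t}. \<Sum>t'\<in>{s..t}.
      of_bool (jump_point (weights \<omega>) a s \<and> edge_free (weights \<omega>) s t') :: real)"
    using sum_jump_point_edge_free[OF assms] by (simp add: prob_space del: sum_of_bool_eq)
  also have "\<dots> = (\<Sum>s\<in>{a..t}. \<Sum>t'\<in>{s..t}. prob (?E s t'))"
    by (simp add: Bochner_Integration.integral_sum Bochner_Integration.integrable_sum
        integral_of_bool[OF events_jump_point_edge_free] del: sum_of_bool_eq)
  also have "\<dots> = (\<Sum>s\<in>{a..t}. prob {\<omega> \<in> space M. jump_point (weights \<omega>) a s}
      * (\<Sum>t'\<in>{s..t}. edge_free_prob p (Suc (nat (t' - s)))))"
    by (intro sum.cong refl)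
      (simp add: prob_jump_point_edge_free sum_distrib_left Suc_nat_eq_nat_zadd1 add.commute)
  also have "\<dots> = (\<Sum>s\<in>{a..t}. prob {\<omega> \<in> space M. jump_point (weights \<omega>) a s}
      * (\<Sum>j<nat (t - s + 1). edge_free_prob p (Suc j)))"
    by (simp only: sum_int_interval_reindex[where g = "\<lambda>j. edge_free_prob p (Suc j)"])
  finally show ?thesis .
qed

lemma expectation_max_path_weight_bounds:
  assumes "a \<le> t"
  defines "E \<equiv> expectation (\<lambda>\<omega>. real (max_path_weight (weights \<omega>) a t))"
  shows "of_int (t - a + 1) \<le> edge_free_series p * (E + 1)"
    and "edge_free_series p * (E + 1) \<le> of_int (t - a + 1) + 1 / p\<^sup>2"
proof -
  define r where "r s = prob {\<omega> \<in> space M. jump_point (weights \<omega>) a s}" for s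
  define P where "P s = (\<Sum>j<nat (t - s + 1). edge_free_prob p (Suc j))" for s
  have E_eq: "edge_free_series p * (E + 1) = (\<Sum>s\<in>{a..t}. r s * edge_free_series p)"
    using expectation_max_path_weight(2)[OF assms(1)]
    by (simp add: E_def r_def sum_distrib_left mult.commute)
  have N_eq: "of_int (t - a + 1) = (\<Sum>s\<in>{a..t}. r s * P s)"
    unfolding r_def P_def by (rule length_eq_sum_prob_jump_point[OF assms(1)])
  have r: "0 \<le> r s" "r s \<le> 1" for s
    by (simp_all add: r_def)
  have P_le: "P s \<le> edge_free_series p" for s
    unfolding P_def by (rule sum_edge_free_prob_le_series[OF p_pos p_less_1])
  show "of_int (t - a + 1) \<le> edge_free_series p * (E + 1)"
    unfolding E_eq N_eq by (intro sum_mono mult_left_mono P_le r)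
  have "edge_free_series p * (E + 1) - of_int (t - a + 1) = (\<Sum>s\<in>{a..t}. r s * (edge_free_series p - P s))"
    unfolding E_eq N_eq by (simp add: sum_subtractf right_diff_distrib)
  also have "\<dots> \<le> (\<Sum>s\<in>{a..t}. (1 - p) ^ Suc (nat (t - s)) / p)"
  proof (intro sum_mono)
    fix s assume "s \<in> {a..t}"
    then have "edge_free_series p - P s \<le> (1 - p) ^ Suc (nat (t - s)) / p"
      using edge_free_series_minus_sum_le[OF p_pos p_less_1, of "nat (t - s + 1)"]
      by (simp add: P_def Suc_nat_eq_nat_zadd1 add.commute)
    moreover have "r s * (edge_free_series p - P s) \<le> edge_free_series p - P s"
      using r[of s] P_le[of s] by (simp add: mult_left_le_one_le)
    ultimately show "r s * (edge_free_series p - P s) \<le> (1 - p) ^ Suc (nat (t - s)) / p"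
      by linarith
  qed
  also have "\<dots> = (\<Sum>j<nat (t - a + 1). (1 - p) ^ Suc j) / p"
    by (simp only: sum_int_interval_reindex_reflect[where g = "\<lambda>j. (1 - p) ^ Suc j / p"]
        sum_divide_distrib)
  also have "\<dots> \<le> 1 / p\<^sup>2"
    using sum_power_Suc_le[OF p_pos p_less_1] p_pos
    by (simp add: power2_eq_square divide_right_mono flip: divide_divide_eq_left)
  finally show "edge_free_series p * (E + 1) \<le> of_int (t - a + 1) + 1 / p\<^sup>2"
    by simp
qed

lemma expectation_max_path_weight_approx:
  assumes "a \<le> t"
  shows "\<bar>expectation (\<lambda>\<omega>. real (max_path_weight (weights \<omega>) a t)) - of_int (t - a + 1) * beta_tr p\<bar>
    \<le> 1 / p\<^sup>2"
proof -
  define \<mu> where "\<mu> = edge_free_series p"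
  define E where "E = expectation (\<lambda>\<omega>. real (max_path_weight (weights \<omega>) a t))"
  define N where "N = real_of_int (t - a + 1)"
  have \<mu>: "1 \<le> \<mu>"
    unfolding \<mu>_def by (rule one_le_edge_free_series[OF p_pos p_less_1])
  have "N / \<mu> \<le> E + 1"
    using expectation_max_path_weight_bounds(1)[OF assms] \<mu>
    by (simp add: E_def N_def \<mu>_def pos_divide_le_eq mult.commute)
  moreover have "E + 1 \<le> N / \<mu> + 1 / p\<^sup>2"
  proof -
    have "E + 1 \<le> (N + 1 / p\<^sup>2) / \<mu>"
      using expectation_max_path_weight_bounds(2)[OF assms] \<mu>
      by (simp add: E_def N_def \<mu>_def pos_le_divide_eq mult.commute)
    also have "\<dots> \<le> N / \<mu> + 1 / p\<^sup>2"
      using divide_left_mono[of 1 \<mu> "1 / p\<^sup>2"] \<mu> by (simp add: add_divide_distrib)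
    finally show ?thesis .
  qed
  moreover have "1 \<le> 1 / p\<^sup>2"
    using p_pos p_less_1 by (simp add: power_le_one)
  moreover have "N * beta_tr p = N / \<mu>"
    by (simp add: beta_tr_eq_inverse \<mu>_def divide_inverse)
  ultimately show ?thesis
    unfolding E_def[symmetric] N_def[symmetric] by linarith
qed

end

section \<open>Concentration along fourth powers\<close>

lemma tendsto_of_abs_diff_le:
  fixes x e :: "'b \<Rightarrow> real"
  assumes "eventually (\<lambda>k. \<bar>x k - c\<bar> \<le> e k) F" "(e \<longlongrightarrow> 0) F"
  shows "(x \<longlongrightarrow> c) F"
  using Lim_null_comparison[of "\<lambda>k. x k - c" e F] assms by (simp add: LIM_zero_cancel)

definition block_vertex :: "nat \<Rightarrow> nat \<Rightarrow> int" where
  "block_vertex k j = 1 + int (j * k)"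

lemma block_vertex_mono: "i \<le> j \<Longrightarrow> block_vertex k i \<le> block_vertex k j"
  unfolding block_vertex_def by (simp only: add_le_cancel_left of_nat_le_iff mult_le_mono1)

context bernoulli_number_line
begin

definition block_weight :: "nat \<Rightarrow> nat \<Rightarrow> 'a \<Rightarrow> real" where
  "block_weight k j \<omega> = real (max_path_weight (weights \<omega>) (block_vertex k j) (block_vertex k (Suc j)))"

lemma measurable_block_weight [measurable]: "block_weight k j \<in> borel_measurable M"
  unfolding block_weight_def by measurable

lemma block_weight_bounds: "block_weight k j \<omega> \<in> {0..real k}"
  using max_path_weight_le_length[of "block_vertex k j" "block_vertex k (Suc j)" "weights \<omega>"]
  by (simp add: block_weight_def block_vertex_def)

lemma indep_block_weights: "indep_vars (\<lambda>_. borel) (block_weight k) {..<m}"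
proof -
  let ?K = "\<lambda>j. edges_within (block_vertex k j) (block_vertex k (Suc j))"
  have "disjoint_family_on ?K {..<m}"
    unfolding disjoint_family_on_def
  proof (intro ballI impI)
    fix i j :: nat assume "i \<noteq> j"
    then have "block_vertex k (Suc i) \<le> block_vertex k j \<or> block_vertex k (Suc j) \<le> block_vertex k i"
      by (cases i j rule: linorder_cases) (auto intro: block_vertex_mono)
    then show "?K i \<inter> ?K j = {}"
      by (auto simp: edges_within_def)
  qed
  then have "indep_vars (\<lambda>j. \<Pi>\<^sub>M e\<in>?K j. count_space UNIV) (\<lambda>j \<omega>. restrict (weights \<omega>) (?K j)) {..<m}"
    by (rule indep_vars_restrict[OF indep_weights edges_within_subset])
  then have "indep_vars (\<lambda>_. borel)
      (\<lambda>j \<omega>. real (max_path_weight (restrict (weights \<omega>) (?K j)) (block_vertex k j) (block_vertex k (Suc j))))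
      {..<m}"
    by (rule indep_vars_compose2) (simp add: measurable_PiM_count_space_finite finite_edges_within)
  moreover have "max_path_weight (restrict (weights \<omega>) (?K j)) (block_vertex k j) (block_vertex k (Suc j))
      = max_path_weight (weights \<omega>) (block_vertex k j) (block_vertex k (Suc j))" for j \<omega>
    by (rule max_path_weight_cong) simp
  ultimately show ?thesis
    by (simp add: block_weight_def[abs_def])
qed

lemma expectation_block_weight_approx:
  "\<bar>expectation (block_weight k j) - (real k + 1) * beta_tr p\<bar> \<le> 1 / p\<^sup>2"
  using expectation_max_path_weight_approx[of "block_vertex k j" "block_vertex k (Suc j)"]
  by (simp add: block_weight_def[abs_def] block_vertex_def)

lemma prob_block_sum_deviation:
  assumes "0 < k" "0 < m" "0 \<le> \<epsilon>"
  shows "prob {\<omega> \<in> space M. \<epsilon> \<le> \<bar>(\<Sum>j<m. block_weight k j \<omega>) - (\<Sum>j<m. expectation (block_weight k j))\<bar>}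
    \<le> 2 * exp (- 2 * \<epsilon>\<^sup>2 / (real m * (real k)\<^sup>2))"
proof -
  interpret Hoeffding_ineq M "{..<m}" "block_weight k" "\<lambda>_. 0" "\<lambda>_. real k"
    "\<Sum>j<m. expectation (block_weight k j)"
  proof unfold_locales
    show "indep_vars (\<lambda>_. borel) (block_weight k) {..<m}"
      by (rule indep_block_weights)
    show "AE \<omega> in M. block_weight k j \<omega> \<in> {0..real k}" for j
      by (intro AE_I2 block_weight_bounds)
  qed simp
  have "prob {\<omega> \<in> space M. \<bar>(\<Sum>j<m. block_weight k j \<omega>) - (\<Sum>j<m. expectation (block_weight k j))\<bar> \<ge> \<epsilon>}
      \<le> 2 * exp (- 2 * \<epsilon>\<^sup>2 / (\<Sum>j<m. (real k - 0)\<^sup>2))"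
    using assms by (intro Hoeffding_ineq_abs_ge) auto
  then show ?thesis
    by simp
qed

lemma AE_eventually_block_sum_deviation:
  "AE \<omega> in M. eventually (\<lambda>k. \<bar>(\<Sum>j<k^3. block_weight k j \<omega>) - (\<Sum>j<k^3. expectation (block_weight k j))\<bar>
    < real k ^ 3 * sqrt k) sequentially"
proof -
  define A where "A k = {\<omega> \<in> space M. real k ^ 3 * sqrt k
    \<le> \<bar>(\<Sum>j<k^3. block_weight k j \<omega>) - (\<Sum>j<k^3. expectation (block_weight k j))\<bar>}" for k
  have [measurable]: "A k \<in> sets M" for k
    unfolding A_def by measurable
  have "prob (A k) \<le> 2 * exp (-2) ^ k" for k
  proof (cases "k = 0")
    case False
    have "(real k ^ 3 * sqrt k)\<^sup>2 = real k ^ 2 * (real (k^3) * (real k)\<^sup>2)"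
      by (simp add: power_mult_distrib eval_nat_numeral)
    then have exponent: "- 2 * (real k ^ 3 * sqrt k)\<^sup>2 / (real (k^3) * (real k)\<^sup>2) = - 2 * real k ^ 2"
      using False by (simp add: divide_eq_eq flip: power_add)
    have "prob (A k) \<le> 2 * exp (- 2 * (real k ^ 3 * sqrt k)\<^sup>2 / (real (k^3) * (real k)\<^sup>2))"
      unfolding A_def using False by (intro prob_block_sum_deviation) auto
    also have "\<dots> \<le> 2 * exp (- 2 * real k)"
      using False unfolding exponent by (simp add: power2_eq_square)
    also have "\<dots> = 2 * exp (-2) ^ k"
      by (simp add: exp_of_nat_mult[symmetric] mult.commute)
    finally show ?thesis .
  qed (auto intro: order_trans[OF prob_le_1])
  then have "summable (\<lambda>k. measure M (A k))"
    by (intro summable_comparison_test[OF _ summable_mult[OF summable_geometric]]) auto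
  then have "AE \<omega> in M. eventually (\<lambda>k. \<omega> \<in> space M - A k) sequentially"
    by (intro borel_cantelli_AE1) (auto simp: less_top[symmetric])
  then show ?thesis
    by (rule AE_mp) (auto simp: A_def elim!: eventually_mono intro!: AE_I2)
qed

lemma sum_expectation_block_weight_approx:
  "\<bar>(\<Sum>j<m. expectation (block_weight k j)) - real m * ((real k + 1) * beta_tr p)\<bar> \<le> real m / p\<^sup>2"
proof -
  have "\<bar>\<Sum>j<m. expectation (block_weight k j) - (real k + 1) * beta_tr p\<bar> \<le> (\<Sum>j<m. 1 / p\<^sup>2)"
    by (rule order_trans[OF sum_abs sum_mono]) (rule expectation_block_weight_approx)
  then show ?thesis
    by (simp add: sum_subtractf)
qed

lemma max_path_weight_block_bounds:
  "(\<Sum>j<k^3. block_weight k j \<omega>) \<le> real (max_path_weight (weights \<omega>) 1 (1 + int (k^4)))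
    \<and> real (max_path_weight (weights \<omega>) 1 (1 + int (k^4))) \<le> (\<Sum>j<k^3. block_weight k j \<omega>) + real k ^ 3"
proof -
  have "block_vertex k j \<le> block_vertex k (Suc j)" for j
    by (simp add: block_vertex_mono)
  note chain = max_path_weight_chain_bounds[where b = "block_vertex k" and m = "k^3" and W = "weights \<omega>",
      OF this]
  have "block_vertex k 0 = 1" "block_vertex k (k^3) = 1 + int (k^4)"
    by (simp_all add: block_vertex_def eval_nat_numeral)
  with chain show ?thesis
    unfolding block_weight_def
    by (simp only: of_nat_sum[symmetric] of_nat_power[symmetric] of_nat_add[symmetric] of_nat_le_iff)
qed

lemma AE_max_path_weight_fourth_powers:
  "AE \<omega> in M. (\<lambda>k. real (max_path_weight (weights \<omega>) 1 (1 + int (k^4))) / real (k^4)) \<longlonglongrightarrow> beta_tr p"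
  using AE_eventually_block_sum_deviation
proof (rule AE_mp, intro AE_I2 impI)
  fix \<omega>
  define S where "S k = (\<Sum>j<k^3. block_weight k j \<omega>)" for k
  define ES where "ES k = (\<Sum>j<k^3. expectation (block_weight k j))" for k
  define X where "X k = real (max_path_weight (weights \<omega>) 1 (1 + int (k^4)))" for k
  define e where "e k = 1 + sqrt k + 1 / p\<^sup>2 + \<bar>beta_tr p\<bar>" for k :: nat
  assume "eventually (\<lambda>k. \<bar>(\<Sum>j<k^3. block_weight k j \<omega>) - (\<Sum>j<k^3. expectation (block_weight k j))\<bar>
    < real k ^ 3 * sqrt k) sequentially"
  then have "eventually (\<lambda>k. \<bar>X k / real (k^4) - beta_tr p\<bar> \<le> e k / real k) sequentially"
    using eventually_gt_at_top[of 0]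
  proof eventually_elim
    case (elim k)
    define T where "T = real k ^ 3 * ((real k + 1) * beta_tr p)"
    have "\<bar>S k - ES k\<bar> \<le> real k ^ 3 * sqrt k"
      using elim by (simp add: S_def ES_def)
    moreover have "S k \<le> X k" "X k \<le> S k + real k ^ 3"
      using max_path_weight_block_bounds[of k \<omega>] by (simp_all add: S_def X_def)
    moreover have "\<bar>ES k - T\<bar> \<le> real k ^ 3 * (1 / p\<^sup>2)"
      using sum_expectation_block_weight_approx[where m = "k^3" and k = k] by (simp add: ES_def T_def)
    moreover have "real (k^4) * beta_tr p = T - real k ^ 3 * beta_tr p"
      by (simp add: T_def algebra_simps eval_nat_numeral)
    moreover have "\<bar>real k ^ 3 * beta_tr p\<bar> \<le> real k ^ 3 * \<bar>beta_tr p\<bar>"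
      by (simp add: abs_mult)
    ultimately have "\<bar>X k - real (k^4) * beta_tr p\<bar> \<le> real k ^ 3 * e k"
      unfolding e_def distrib_left by (simp only: abs_le_iff mult_1_right) linarith
    moreover have "X k / real (k^4) - beta_tr p = (X k - real (k^4) * beta_tr p) / real (k^4)"
      using elim by (simp add: field_simps)
    ultimately have "\<bar>X k / real (k^4) - beta_tr p\<bar> \<le> real k ^ 3 * e k / real (k^4)"
      by (simp add: abs_divide divide_right_mono)
    also have "\<dots> = e k / real k"
      using elim by (simp add: eval_nat_numeral)
    finally show ?case .
  qed
  moreover have "(\<lambda>k. e k / real k) \<longlonglongrightarrow> 0"
    unfolding e_def by real_asymp
  ultimately show "(\<lambda>k. X k / real (k^4)) \<longlonglongrightarrow> beta_tr p"
    by (rule tendsto_of_abs_diff_le)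
qed

end

section \<open>Convergence\<close>

lemma floor_sqrt_floor_sqrt_bounds:
  "floor_sqrt (floor_sqrt n) ^ 4 \<le> n" "n < Suc (floor_sqrt (floor_sqrt n)) ^ 4"
proof -
  let ?r = "floor_sqrt n"
  have "floor_sqrt ?r ^ 4 = ((floor_sqrt ?r)\<^sup>2)\<^sup>2"
    by (simp flip: power_mult)
  also have "\<dots> \<le> ?r\<^sup>2"
    by (intro power_mono) simp_all
  also have "\<dots> \<le> n"
    by simp
  finally show "floor_sqrt ?r ^ 4 \<le> n" .
  have "Suc ?r \<le> (Suc (floor_sqrt ?r))\<^sup>2"
    using Suc_floor_sqrt_power2_gt[of ?r] by simp
  then have "(Suc ?r)\<^sup>2 \<le> ((Suc (floor_sqrt ?r))\<^sup>2)\<^sup>2"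
    by (rule power_mono) simp
  then show "n < Suc (floor_sqrt ?r) ^ 4"
    using Suc_floor_sqrt_power2_gt[of n] by (simp flip: power_mult)
qed

lemma tendsto_div_fourth_power_neighbours:
  fixes y :: "nat \<Rightarrow> real"
  assumes lim: "(\<lambda>k. y (k^4) / real (k^4)) \<longlonglongrightarrow> c"
  shows "(\<lambda>k. y (k^4) / real (Suc k ^ 4)) \<longlonglongrightarrow> c"
    and "(\<lambda>k. y (Suc k ^ 4) / real (k^4)) \<longlonglongrightarrow> c"
proof -
  have "(\<lambda>k. real k ^ 4 / (real k + 1) ^ 4) \<longlonglongrightarrow> 1" "(\<lambda>k. (real k + 1) ^ 4 / real k ^ 4) \<longlonglongrightarrow> 1"
    by real_asymp+
  from tendsto_mult[OF lim this(1)] tendsto_mult[OF LIMSEQ_Suc[OF lim] this(2)]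
  have "(\<lambda>k. y (k^4) / real (k^4) * (real k ^ 4 / (real k + 1) ^ 4)) \<longlonglongrightarrow> c"
    and "(\<lambda>k. y (Suc k ^ 4) / real (Suc k ^ 4) * ((real k + 1) ^ 4 / real k ^ 4)) \<longlonglongrightarrow> c"
    by simp_all
  moreover have "\<forall>\<^sub>F k in sequentially.
      y (k^4) / real (k^4) * (real k ^ 4 / (real k + 1) ^ 4) = y (k^4) / real (Suc k ^ 4)"
    "\<forall>\<^sub>F k in sequentially.
      y (Suc k ^ 4) / real (Suc k ^ 4) * ((real k + 1) ^ 4 / real k ^ 4) = y (Suc k ^ 4) / real (k^4)"
    using eventually_gt_at_top[of 0] by (eventually_elim, simp add: field_simps)+
  ultimately show "(\<lambda>k. y (k^4) / real (Suc k ^ 4)) \<longlonglongrightarrow> c" "(\<lambda>k. y (Suc k ^ 4) / real (k^4)) \<longlonglongrightarrow> c"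
    by (auto elim: Lim_transform_eventually)
qed

lemma tendsto_div_of_tendsto_fourth_powers:
  fixes y :: "nat \<Rightarrow> real"
  assumes mono: "mono y" and nonneg: "\<And>n. 0 \<le> y n"
    and lim: "(\<lambda>k. y (k^4) / real (k^4)) \<longlonglongrightarrow> c"
  shows "(\<lambda>n. y n / real n) \<longlonglongrightarrow> c"
proof -
  define \<kappa> where "\<kappa> n = floor_sqrt (floor_sqrt n)" for n
  have \<kappa>_ge: "K \<le> \<kappa> n" if "K ^ 4 \<le> n" for K n
    using that unfolding \<kappa>_def by (intro le_floor_sqrtI) (simp flip: power_mult)
  have "filterlim \<kappa> at_top sequentially"
    unfolding filterlim_at_top by (intro allI eventually_sequentiallyI[of "_ ^ 4"] \<kappa>_ge)
  from this[THEN filterlim_compose[OF tendsto_div_fourth_power_neighbours(1)[OF lim]]]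
    this[THEN filterlim_compose[OF tendsto_div_fourth_power_neighbours(2)[OF lim]]]
  have lower: "(\<lambda>n. y (\<kappa> n ^ 4) / real (Suc (\<kappa> n) ^ 4)) \<longlonglongrightarrow> c"
    and upper: "(\<lambda>n. y (Suc (\<kappa> n) ^ 4) / real (\<kappa> n ^ 4)) \<longlonglongrightarrow> c" .
  have "y (\<kappa> n ^ 4) / real (Suc (\<kappa> n) ^ 4) \<le> y n / real n \<and> y n / real n \<le> y (Suc (\<kappa> n) ^ 4) / real (\<kappa> n ^ 4)"
    if "1 \<le> n" for n
  proof
    have bounds: "\<kappa> n ^ 4 \<le> n" "n < Suc (\<kappa> n) ^ 4" "1 \<le> \<kappa> n"
      using floor_sqrt_floor_sqrt_bounds[of n] \<kappa>_ge[of 1 n] that by (simp_all add: \<kappa>_def)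
    have "y (\<kappa> n ^ 4) / real (Suc (\<kappa> n) ^ 4) \<le> y n / real (Suc (\<kappa> n) ^ 4)"
      using mono bounds by (intro divide_right_mono) (auto dest: monoD)
    also have "\<dots> \<le> y n / real n"
      using nonneg that bounds by (intro divide_left_mono) (auto simp flip: of_nat_power)
    finally show "y (\<kappa> n ^ 4) / real (Suc (\<kappa> n) ^ 4) \<le> y n / real n" .
    have "y n / real n \<le> y (Suc (\<kappa> n) ^ 4) / real n"
      using mono bounds that by (intro divide_right_mono) (auto dest: monoD intro: less_imp_le)
    also have "\<dots> \<le> y (Suc (\<kappa> n) ^ 4) / real (\<kappa> n ^ 4)"
      using nonneg that bounds by (intro divide_left_mono) auto
    finally show "y n / real n \<le> y (Suc (\<kappa> n) ^ 4) / real (\<kappa> n ^ 4)" .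
  qed
  then show ?thesis
    by (intro tendsto_sandwich[OF _ _ lower upper]) (auto intro: eventually_sequentiallyI[of 1])
qed

context bernoulli_number_line
begin

lemma AE_tendsto_max_path_weight:
  "AE \<omega> in M. (\<lambda>n. real (max_path_weight (weights \<omega>) 1 (int n)) / (real n - 1)) \<longlonglongrightarrow> beta_tr p"
  using AE_max_path_weight_fourth_powers
proof (rule AE_mp, intro AE_I2 impI)
  fix \<omega>
  let ?y = "\<lambda>n. real (max_path_weight (weights \<omega>) 1 (1 + int n))"
  assume lim: "(\<lambda>k. ?y (k^4) / real (k^4)) \<longlonglongrightarrow> beta_tr p"
  have "mono ?y"
    by (rule monoI) (simp add: max_path_weight_mono)
  then have "(\<lambda>n. ?y n / real n) \<longlonglongrightarrow> beta_tr p"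
    by (rule tendsto_div_of_tendsto_fourth_powers[OF _ _ lim]) simp
  moreover have "(\<lambda>n. real (max_path_weight (weights \<omega>) 1 (int (Suc n))) / (real (Suc n) - 1))
      = (\<lambda>n. ?y n / real n)"
    by simp
  ultimately have "(\<lambda>n. real (max_path_weight (weights \<omega>) 1 (int (Suc n))) / (real (Suc n) - 1))
      \<longlonglongrightarrow> beta_tr p"
    by (simp only:)
  then show "(\<lambda>n. real (max_path_weight (weights \<omega>) 1 (int n)) / (real n - 1)) \<longlonglongrightarrow> beta_tr p"
    by (rule LIMSEQ_imp_Suc)
qed

lemma tendsto_expectation_max_path_weight:
  "(\<lambda>n. expectation (\<lambda>\<omega>. real (max_path_weight (weights \<omega>) 1 (int n))) / (real n - 1)) \<longlonglongrightarrow> beta_tr p"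
proof (rule tendsto_of_abs_diff_le)
  show "(\<lambda>n. (1 / p\<^sup>2 + \<bar>beta_tr p\<bar>) / (real n - 1)) \<longlonglongrightarrow> 0"
    by real_asymp
  show "\<forall>\<^sub>F n in sequentially. \<bar>expectation (\<lambda>\<omega>. real (max_path_weight (weights \<omega>) 1 (int n))) / (real n - 1)
      - beta_tr p\<bar> \<le> (1 / p\<^sup>2 + \<bar>beta_tr p\<bar>) / (real n - 1)"
  proof (rule eventually_sequentiallyI[of 2])
    fix n :: nat assume "2 \<le> n"
    define E where "E = expectation (\<lambda>\<omega>. real (max_path_weight (weights \<omega>) 1 (int n)))"
    have "\<bar>E - real n * beta_tr p\<bar> \<le> 1 / p\<^sup>2"
      using expectation_max_path_weight_approx[of 1 "int n"] \<open>2 \<le> n\<close> by (simp add: E_def)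
    then have "\<bar>E - (real n - 1) * beta_tr p\<bar> \<le> 1 / p\<^sup>2 + \<bar>beta_tr p\<bar>"
      by (simp add: algebra_simps abs_le_iff) linarith
    moreover have "E / (real n - 1) - beta_tr p = (E - (real n - 1) * beta_tr p) / (real n - 1)"
      using \<open>2 \<le> n\<close> by (simp add: field_simps)
    ultimately show "\<bar>E / (real n - 1) - beta_tr p\<bar> \<le> (1 / p\<^sup>2 + \<bar>beta_tr p\<bar>) / (real n - 1)"
      using \<open>2 \<le> n\<close> by (simp add: divide_right_mono abs_divide)
  qed
qed

lemma tendsto_L1_max_path_weight:
  "(\<lambda>n. \<integral>\<omega>. \<bar>real (max_path_weight (weights \<omega>) 1 (int n)) / (real n - 1) - beta_tr p\<bar> \<partial>M) \<longlonglongrightarrow> 0"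
proof (rule LIMSEQ_offset[where k = 2])
  \<comment> \<open>For \<open>n = 0, 1\<close> the integrand is junk (an empty \<open>Max\<close>, a division by zero).\<close>
  let ?f = "\<lambda>n \<omega>. \<bar>real (max_path_weight (weights \<omega>) 1 (int n)) / (real n - 1) - beta_tr p\<bar>"
  have "(\<lambda>n. \<integral>\<omega>. ?f (n + 2) \<omega> \<partial>M) \<longlonglongrightarrow> (\<integral>\<omega>. 0 \<partial>M)"
  proof (rule integral_dominated_convergence[where w = "\<lambda>_. 1 + \<bar>beta_tr p\<bar>"])
    show "AE \<omega> in M. (\<lambda>n. ?f (n + 2) \<omega>) \<longlonglongrightarrow> 0"
      using AE_tendsto_max_path_weight
    proof (rule AE_mp, intro AE_I2 impI)
      fix \<omega>
      assume "(\<lambda>n. real (max_path_weight (weights \<omega>) 1 (int n)) / (real n - 1)) \<longlonglongrightarrow> beta_tr p"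
      then have "(\<lambda>n. real (max_path_weight (weights \<omega>) 1 (int (n + 2))) / (real (n + 2) - 1))
          \<longlonglongrightarrow> beta_tr p"
        by (rule LIMSEQ_ignore_initial_segment)
      then show "(\<lambda>n. ?f (n + 2) \<omega>) \<longlonglongrightarrow> 0"
        by (intro tendsto_rabs_zero LIM_zero)
    qed
    show "AE \<omega> in M. norm (?f (n + 2) \<omega>) \<le> 1 + \<bar>beta_tr p\<bar>" for n
    proof (intro AE_I2)
      fix \<omega>
      define q where "q = real (max_path_weight (weights \<omega>) 1 (int (n + 2))) / (real (n + 2) - 1)"
      have "real (max_path_weight (weights \<omega>) 1 (int (n + 2))) \<le> real (n + 1)"
        using max_path_weight_le_length[of 1 "int (n + 2)" "weights \<omega>"] by simp
      then have "\<bar>q\<bar> \<le> 1"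
        by (simp add: q_def)
      moreover have "norm (?f (n + 2) \<omega>) = \<bar>q - beta_tr p\<bar>"
        by (simp add: q_def)
      ultimately show "norm (?f (n + 2) \<omega>) \<le> 1 + \<bar>beta_tr p\<bar>"
        using abs_triangle_ineq4[of q "beta_tr p"] by linarith
    qed
  qed simp_all
  then show "(\<lambda>n. \<integral>\<omega>. ?f (n + 2) \<omega> \<partial>M) \<longlonglongrightarrow> 0"
    by simp
qed

end

theorem theorem5:
  fixes M :: "'a measure" and w :: "int \<times> int \<Rightarrow> 'a \<Rightarrow> bool" and p :: real
    and X :: "nat \<Rightarrow> 'a \<Rightarrow> real"
  assumes "prob_space M"
    and "0 < p" and "p < 1"
    and "prob_space.indep_vars M (\<lambda>_. count_space UNIV) w {e. fst e < snd e}"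
    and "\<And>e. fst e < snd e \<Longrightarrow> distr M (count_space UNIV) (w e) = measure_pmf (bernoulli_pmf p)"
    and "\<And>n \<omega>. X n \<omega> = real (max_path_weight (\<lambda>e. w e \<omega>) 1 (int n))"
  shows "(AE \<omega> in M. (\<lambda>n. X n \<omega> / (real n - 1)) \<longlonglongrightarrow> beta_tr p)
    \<and> (\<forall>n\<ge>1. integrable M (\<lambda>\<omega>. max (X n \<omega>) 0))
    \<and> (\<lambda>n. \<integral>\<omega>. \<bar>max (X n \<omega>) 0 / (real n - 1) - beta_tr p\<bar> \<partial>M) \<longlonglongrightarrow> 0
    \<and> (\<lambda>n. (\<integral>\<omega>. X n \<omega> \<partial>M) / (real n - 1)) \<longlonglongrightarrow> beta_tr p"
proof -
  interpret bernoulli_number_line M w p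
    using assms(1-5) by (intro bernoulli_number_line.intro bernoulli_number_line_axioms.intro)
  have X: "X = (\<lambda>n \<omega>. real (max_path_weight (weights \<omega>) 1 (int n)))"
    using assms(6) by (intro ext)
  show ?thesis
    unfolding X
    using AE_tendsto_max_path_weight expectation_max_path_weight(1)[of 1]
      tendsto_L1_max_path_weight tendsto_expectation_max_path_weight
    by (simp add: max_absorb1)
qed

end
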